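(* Under the standing assumptions, suppose that $$\operatorname{epi}(f-g+\delta_A)^c\cap B=\Lambda\cap B.$$ Then the following are equivalent: (i) strong duality holds for $(P)-(D^F)$; (ii) strong duality holds for $(P)-(\bar D^F)$ and $\Omega\cap B=K\cap B$. (The implication (ii)$\Rightarrow$(i) holds even without the displayed hypothesis.)
   Context: Let $X$ be a nontrivial separated locally convex space with topological dual $X^*$, endowed with the topology $\sigma(X,X^* )$; $\langle x,x^*\rangle$ is the value of $x^*\in X^*$ at $x\in X$. Put $W:=X^*\times X^*\times\mathbb{R}$, $\mathbb{R}_{++}:=]0,+\infty[$ and $Z:=X^*\times X^*\times\mathbb{R}_{++}$. For $y^*\in X^*$, $\alpha\in\mathbb{R}$, let $H^-_{y^*,\alpha}:=\{x\in X:\langle x,y^*\rangle<\alpha\}$. The coupling function $c:X\times W\to\overline{\mathbb{R}}$ is $c(x,(x^*,y^*,\alpha)):=\langle x,x^*\rangle$ if $\langle x,y^*\rangle<\alpha$ and $:=+\infty$ otherwise. For $h:X\to\overline{\mathbb{R}}$ its $c$-conjugate is $h^c:W\to\overline{\mathbb{R}}$, $h^c(w):=\sup_{x\in X}\{c(x,w)-h(x)\}$, with the convention $(+\infty)+(-\infty)=(-\infty)+(+\infty)=(+\infty)-(+\infty)=(-\infty)-(-\infty)=-\infty$ (so for proper $h$, $h^c(x^*,y^*,\alpha)=h^*(x^* )$ if $\operatorname{dom}h\subseteq H^-_{y^*,\alpha}$ and $+\infty$ otherwise). Epigraphs of functions on $W$ are subsets of $W\times\mathbb{R}$. $\delta_A$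 is the indicator function of $A$. For $E\subseteq W\times\mathbb{R}$ and $e\in W\times\mathbb{R}$, $E-e:=\{z-e:z\in E\}$. Standing assumptions: $f,g:X\to\overline{\mathbb{R}}$ proper convex with $\operatorname{dom}f\subseteq\operatorname{dom}g$, $A\subseteq X$ nonempty, convention $(+\infty)-(+\infty)=+\infty$ in $f-g$; $v(P)=\inf_{x\in X}\{f(x)-g(x)+\delta_A(x)\}$. With $\varphi(u^*,v^*,\gamma;x^*,y^*,\alpha):=g^c(u^*,v^*,\gamma)-f^c(u^*-x^*,-y^*,\alpha)-\delta_A^c(x^*,y^*,\alpha)$: $v(D^F):=\sup_{(x^*,y^*,\alpha)\in Z}\inf_{(u^*,v^*,\gamma)\in\operatorname{dom}g^c}\varphi$ and $v(\bar D^F):=\inf_{(u^*,v^*,\gamma)\in\operatorname{dom}g^c}\sup_{(x^*,y^*,\alpha)\in Z}\varphi$. Strong duality for $(P)-(D^F)$ means $v(P)=v(D^F)$ and there is $(\bar x^*,\bar y^*,\bar\alpha)\in\operatorname{dom}\delta_A^c$ with $\varphi(u^*,v^*,\gamma;\bar x^*,\bar y^*,\bar\alpha)\ge v(D^F)$ for all $(u^*,v^*,\gamma)\in\operatorname{dom}g^c$. Strong duality for $(P)-(\bar D^F)$ means $v(P)=v(\bar D^F)$ and for every $(u^*,v^*,\gamma)\in\operatorname{dom}g^c$ there is $(x^*,y^*,\alpha)\in\operatorname{dom}\delta_A^c$ with $\varphi(u^*,v^*,\gamma;x^*,y^*,\alpha)\ge v(\bar D^F)$. Sets: $B:=\{0\}\times\{0\}\times\mathbb{R}_{++}\times\mathbb{R}\subseteq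 W\times\mathbb{R}$; $\Lambda:=\bigcap_{(u^*,v^*,\gamma)\in\operatorname{dom}g^c}\Big[\operatorname{epi}(f+\delta_A)^c-\big(u^*,0,0,g^c(u^*,v^*,\gamma)\big)\Big]$; $\Omega:=\bigcup_{(x^*,y^*,\alpha)\in\operatorname{dom}\delta_A^c}\ \bigcap_{(u^*,v^*,\gamma)\in\operatorname{dom}g^c}\Big[\operatorname{epi}\big(f-c(\cdot,(-x^*,-y^*,\alpha))\big)^c-\big(u^*,0,0,g^c(u^*,v^*,\gamma)-\delta_A^c(x^*,y^*,\alpha)\big)\Big]$, $K:=\bigcap_{(u^*,v^*,\gamma)\in\operatorname{dom}g^c}\ \bigcup_{(x^*,y^*,\alpha)\in\operatorname{dom}\delta_A^c}\Big[\operatorname{epi}\big(f-c(\cdot,(-x^*,-y^*,\alpha))\big)^c-\big(u^*,0,0,g^c(u^*,v^*,\gamma)-\delta_A^c(x^*,y^*,\alpha)\big)\Big]$. *)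

theory Defs
  imports "HOL-Analysis.Analysis" "HOL-Library.Extended_Real"
begin

definition hlc_space :: "'a::real_vector topology \<Rightarrow> bool" where
  "hlc_space T \<longleftrightarrow>
     topspace T = UNIV \<and> Hausdorff_space T \<and>
     continuous_map (prod_topology T T) T (\<lambda>(x, y). x + y) \<and>
     continuous_map (prod_topology euclideanreal T) T (\<lambda>(a, x). a *\<^sub>R x) \<and>
     (\<forall>U. openin T U \<and> 0 \<in> U \<longrightarrow> (\<exists>V. openin T V \<and> convex V \<and> 0 \<in> V \<and> V \<subseteq> U))"

definition tdual :: "'a::real_vector topology \<Rightarrow> ('a \<Rightarrow> real) set" where
  "tdual T = {l. linear l \<and> continuous_map T euclideanreal l}"

type_synonym 'a wpt = "('a \<Rightarrow> real) \<times> ('a \<Rightarrow> real) \<times> real"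

definition Wsp :: "'a::real_vector topology \<Rightarrow> 'a wpt set" where
  "Wsp T = tdual T \<times> tdual T \<times> UNIV"

definition Zsp :: "'a::real_vector topology \<Rightarrow> 'a wpt set" where
  "Zsp T = tdual T \<times> tdual T \<times> {0<..}"

definition lsub :: "ereal \<Rightarrow> ereal \<Rightarrow> ereal" where
  "lsub a b = (if (a = \<infinity> \<and> b = \<infinity>) \<or> (a = -\<infinity> \<and> b = -\<infinity>) then -\<infinity> else a - b)"

definition usub :: "ereal \<Rightarrow> ereal \<Rightarrow> ereal" where
  "usub a b = (if a = \<infinity> \<and> b = \<infinity> then \<infinity> else a - b)"

definition coupling :: "'a \<Rightarrow> 'a wpt \<Rightarrow> ereal" where
  "coupling x w = (case w of (xs, ys, \<alpha>) \<Rightarrow> if ys x < \<alpha> then ereal (xs x) else \<infinity>)"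

definition cconj :: "('a \<Rightarrow> ereal) \<Rightarrow> 'a wpt \<Rightarrow> ereal" where
  "cconj h w = (SUP x. lsub (coupling x w) (h x))"

definition indic :: "'a set \<Rightarrow> 'a \<Rightarrow> ereal" where
  "indic A x = (if x \<in> A then 0 else \<infinity>)"

definition edom :: "'b set \<Rightarrow> ('b \<Rightarrow> ereal) \<Rightarrow> 'b set" where
  "edom S h = {w \<in> S. h w < \<infinity>}"

definition wepi :: "'a::real_vector topology \<Rightarrow> ('a wpt \<Rightarrow> ereal) \<Rightarrow> ('a wpt \<times> real) set" where
  "wepi T h = {(w, r). w \<in> Wsp T \<and> h w \<le> ereal r}"

definition wshift :: "('a wpt \<times> real) set \<Rightarrow> ('a wpt \<times> real) \<Rightarrow> ('a wpt \<times> real) set" where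
  "wshift E e = (\<lambda>((xs, ys, \<alpha>), r). case e of ((xs', ys', \<alpha>'), r') \<Rightarrow>
                    ((xs - xs', ys - ys', \<alpha> - \<alpha>'), r - r')) ` E"

definition Bset :: "('a wpt \<times> real) set" where
  "Bset = {((xs, ys, \<alpha>), r). xs = (\<lambda>_. 0) \<and> ys = (\<lambda>_. 0) \<and> \<alpha> > 0}"

definition proper_fun :: "('a \<Rightarrow> ereal) \<Rightarrow> bool" where
  "proper_fun f \<longleftrightarrow> (\<forall>x. f x \<noteq> -\<infinity>) \<and> (\<exists>x. f x < \<infinity>)"

definition convex_fun :: "('a::real_vector \<Rightarrow> ereal) \<Rightarrow> bool" where
  "convex_fun f \<longleftrightarrow> convex {(x, r::real). f x \<le> ereal r}"

definition fdom :: "('a \<Rightarrow> ereal) \<Rightarrow> 'a set" where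
  "fdom f = {x. f x < \<infinity>}"

definition phiF :: "('a \<Rightarrow> ereal) \<Rightarrow> ('a \<Rightarrow> ereal) \<Rightarrow> 'a set \<Rightarrow> 'a wpt \<Rightarrow> 'a wpt \<Rightarrow> ereal" where
  "phiF f g A u z = (case u of (us, vs, \<gamma>) \<Rightarrow> case z of (xs, ys, \<alpha>) \<Rightarrow>
     lsub (lsub (cconj g (us, vs, \<gamma>)) (cconj f (us - xs, - ys, \<alpha>))) (cconj (indic A) (xs, ys, \<alpha>)))"

definition vP :: "('a \<Rightarrow> ereal) \<Rightarrow> ('a \<Rightarrow> ereal) \<Rightarrow> 'a set \<Rightarrow> ereal" where
  "vP f g A = (INF x. usub (f x) (g x) + indic A x)"

definition vDF :: "'a::real_vector topology \<Rightarrow> ('a \<Rightarrow> ereal) \<Rightarrow> ('a \<Rightarrow> ereal) \<Rightarrow> 'a set \<Rightarrow> ereal" where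
  "vDF T f g A = (SUP z \<in> Zsp T. INF u \<in> edom (Wsp T) (cconj g). phiF f g A u z)"

definition vDFbar :: "'a::real_vector topology \<Rightarrow> ('a \<Rightarrow> ereal) \<Rightarrow> ('a \<Rightarrow> ereal) \<Rightarrow> 'a set \<Rightarrow> ereal" where
  "vDFbar T f g A = (INF u \<in> edom (Wsp T) (cconj g). SUP z \<in> Zsp T. phiF f g A u z)"

definition strong_duality_DF :: "'a::real_vector topology \<Rightarrow> ('a \<Rightarrow> ereal) \<Rightarrow> ('a \<Rightarrow> ereal) \<Rightarrow> 'a set \<Rightarrow> bool" where
  "strong_duality_DF T f g A \<longleftrightarrow> vP f g A = vDF T f g A \<and>
     (\<exists>z \<in> edom (Wsp T) (cconj (indic A)).
        \<forall>u \<in> edom (Wsp T) (cconj g). phiF f g A u z \<ge> vDF T f g A)"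

definition strong_duality_DFbar :: "'a::real_vector topology \<Rightarrow> ('a \<Rightarrow> ereal) \<Rightarrow> ('a \<Rightarrow> ereal) \<Rightarrow> 'a set \<Rightarrow> bool" where
  "strong_duality_DFbar T f g A \<longleftrightarrow> vP f g A = vDFbar T f g A \<and>
     (\<forall>u \<in> edom (Wsp T) (cconj g). \<exists>z \<in> edom (Wsp T) (cconj (indic A)).
        phiF f g A u z \<ge> vDFbar T f g A)"

definition LambdaSet :: "'a::real_vector topology \<Rightarrow> ('a \<Rightarrow> ereal) \<Rightarrow> ('a \<Rightarrow> ereal) \<Rightarrow> 'a set \<Rightarrow> ('a wpt \<times> real) set" where
  "LambdaSet T f g A = (\<Inter>u \<in> edom (Wsp T) (cconj g).
      wshift (wepi T (cconj (\<lambda>x. f x + indic A x)))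
             ((fst u, (\<lambda>_. 0), 0), real_of_ereal (cconj g u)))"

definition OKpiece :: "'a::real_vector topology \<Rightarrow> ('a \<Rightarrow> ereal) \<Rightarrow> ('a \<Rightarrow> ereal) \<Rightarrow> 'a set \<Rightarrow> 'a wpt \<Rightarrow> 'a wpt \<Rightarrow> ('a wpt \<times> real) set" where
  "OKpiece T f g A z u = (case z of (xs, ys, \<alpha>) \<Rightarrow>
      wshift (wepi T (cconj (\<lambda>x. usub (f x) (coupling x (- xs, - ys, \<alpha>)))))
             ((fst u, (\<lambda>_. 0), 0), real_of_ereal (cconj g u) - real_of_ereal (cconj (indic A) z)))"

definition OmegaSet :: "'a::real_vector topology \<Rightarrow> ('a \<Rightarrow> ereal) \<Rightarrow> ('a \<Rightarrow> ereal) \<Rightarrow> 'a set \<Rightarrow> ('a wpt \<times> real) set" where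
  "OmegaSet T f g A = (\<Union>z \<in> edom (Wsp T) (cconj (indic A)). \<Inter>u \<in> edom (Wsp T) (cconj g). OKpiece T f g A z u)"

definition KSet :: "'a::real_vector topology \<Rightarrow> ('a \<Rightarrow> ereal) \<Rightarrow> ('a \<Rightarrow> ereal) \<Rightarrow> 'a set \<Rightarrow> ('a wpt \<times> real) set" where
  "KSet T f g A = (\<Inter>u \<in> edom (Wsp T) (cconj g). \<Union>z \<in> edom (Wsp T) (cconj (indic A)). OKpiece T f g A z u)"

end

theory Submission
  imports Defs
begin

text \<open>On the ray \<open>B\<close> all four sets become statements about real lower bounds: a point of \<open>\<Omega>\<close>
  or \<open>K\<close> is a bound \<open>t \<le> \<phi>(u, z)\<close> attained by one \<open>z\<close> for all \<open>u\<close>, resp. by some \<open>z\<close> for each \<open>u\<close>, and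
  the hypothesis on \<open>\<Lambda>\<close> says that \<open>v(P)\<close> dominates the Toland-Singer type value
  \<open>inf\<^sub>u g\<^sup>c(u) - (f + \<delta>\<^sub>A)\<^sup>c(u*, 0, 1)\<close>.  Weak duality \<open>\<phi>(u, z) \<le> g\<^sup>c(u) - (f + \<delta>\<^sub>A)\<^sup>c(u*, 0, 1)\<close>
  and the minimax inequality between the two dual values then close the chain of inequalities in
  both directions.\<close>

lemma zero_in_tdual: "(\<lambda>_. 0) \<in> tdual T"
  unfolding tdual_def by (auto intro!: linearI)

lemma proper_fun_indic: "A \<noteq> {} \<Longrightarrow> proper_fun (indic A)"
  unfolding proper_fun_def indic_def by auto

lemma cconj_neq_minf:
  assumes "proper_fun h"
  shows "cconj h w \<noteq> -\<infinity>"
proof -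
  obtain x0 v where v: "h x0 = ereal v"
    using assms unfolding proper_fun_def by (metis ereal_cases less_ereal.simps(2))
  have "lsub (coupling x0 w) (h x0) \<le> cconj h w"
    unfolding cconj_def by (rule SUP_upper) simp
  moreover have "lsub (coupling x0 w) (h x0) \<noteq> -\<infinity>"
    using v by (cases w) (auto simp: lsub_def coupling_def)
  ultimately show ?thesis by auto
qed

lemma cconj_real_on_edom:
  "proper_fun h \<Longrightarrow> w \<in> edom S (cconj h) \<Longrightarrow> cconj h w = ereal (real_of_ereal (cconj h w))"
  using cconj_neq_minf[of h w] unfolding edom_def by (cases "cconj h w") auto

lemma lsub_mono: "a \<le> a' \<Longrightarrow> b' \<le> b \<Longrightarrow> lsub a b \<le> lsub a' b'"
  unfolding lsub_def by (cases a; cases a'; cases b; cases b') auto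

lemma cconj_antimono_level: "\<alpha> \<le> \<alpha>' \<Longrightarrow> cconj h (xs, ys, \<alpha>') \<le> cconj h (xs, ys, \<alpha>)"
  unfolding cconj_def coupling_def by (intro SUP_mono' lsub_mono) auto

lemma phiF_triple:
  "phiF f g A u (xs, ys, \<alpha>) =
   lsub (lsub (cconj g u) (cconj f (fst u - xs, - ys, \<alpha>))) (cconj (indic A) (xs, ys, \<alpha>))"
  unfolding phiF_def by (cases u) auto

lemma phiF_mono_level: "\<alpha> \<le> \<alpha>' \<Longrightarrow> phiF f g A u (xs, ys, \<alpha>) \<le> phiF f g A u (xs, ys, \<alpha>')"
  unfolding phiF_triple by (intro lsub_mono order_refl cconj_antimono_level)

text \<open>Since both conjugates are \<open>> -\<infinity>\<close>, the nonstandard subtraction \<open>lsub\<close> agrees here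
  with the ordinary one.\<close>
lemma phiF_eq_minus_sum:
  assumes "proper_fun f" "A \<noteq> {}" "cconj g u = ereal G"
  shows "phiF f g A u (xs, ys, \<alpha>) =
         ereal G - (cconj f (fst u - xs, - ys, \<alpha>) + cconj (indic A) (xs, ys, \<alpha>))"
proof -
  have "cconj f (fst u - xs, - ys, \<alpha>) \<noteq> -\<infinity>" "cconj (indic A) (xs, ys, \<alpha>) \<noteq> -\<infinity>"
    using assms(1,2) by (simp_all add: cconj_neq_minf proper_fun_indic)
  then show ?thesis
    unfolding phiF_triple assms(3)
    by (cases "cconj f (fst u - xs, - ys, \<alpha>)"; cases "cconj (indic A) (xs, ys, \<alpha>)") (auto simp: lsub_def)
qed

lemma phiF_neq_pinf:
  assumes "proper_fun f" "A \<noteq> {}" "cconj g u = ereal G"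
  shows "phiF f g A u z \<noteq> \<infinity>"
proof -
  obtain xs ys \<alpha> where z: "z = (xs, ys, \<alpha>)" by (cases z)
  have "cconj f (fst u - xs, - ys, \<alpha>) \<noteq> -\<infinity>" "cconj (indic A) (xs, ys, \<alpha>) \<noteq> -\<infinity>"
    using assms(1,2) by (simp_all add: cconj_neq_minf proper_fun_indic)
  then show ?thesis
    unfolding z phiF_eq_minus_sum[OF assms]
    by (cases "cconj f (fst u - xs, - ys, \<alpha>)"; cases "cconj (indic A) (xs, ys, \<alpha>)") auto
qed

lemma cconj_zero_slope:
  "\<beta> > 0 \<Longrightarrow> cconj h (xs, (\<lambda>_. 0), \<beta>) = (SUP x. lsub (ereal (xs x)) (h x))"
  unfolding cconj_def coupling_def by simp

lemma cconj_origin: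
  assumes "\<beta> > 0"
  shows "cconj h ((\<lambda>_. 0), (\<lambda>_. 0), \<beta>) = - (INF x. h x)"
proof -
  have "cconj h ((\<lambda>_. 0), (\<lambda>_. 0), \<beta>) = (SUP x. - h x)"
    using assms unfolding cconj_def coupling_def lsub_def by (simp add: zero_ereal_def[symmetric])
  also have "\<dots> = - (INF x. h x)" by (rule ereal_SUP_uminus_eq)
  finally show ?thesis .
qed

text \<open>This is what turns membership in \<open>\<Omega>\<close> and \<open>K\<close> into statements about \<open>\<phi>\<close>.\<close>
lemma cconj_usub_coupling:
  assumes "\<forall>x. f x \<noteq> -\<infinity>" "\<beta> > 0"
  shows "cconj (\<lambda>x. usub (f x) (coupling x (- xs, - ys, \<alpha>))) (us, (\<lambda>_. 0), \<beta>)
       = cconj f (us - xs, - ys, \<alpha>)"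
  unfolding cconj_zero_slope[OF assms(2)] unfolding cconj_def
proof (rule SUP_cong[OF refl])
  fix x
  show "lsub (ereal (us x)) (usub (f x) (coupling x (- xs, - ys, \<alpha>)))
      = lsub (coupling x (us - xs, - ys, \<alpha>)) (f x)"
    using assms(1) unfolding lsub_def usub_def coupling_def by (cases "f x") auto
qed

lemma cconj_add_indic_le:
  assumes "\<beta> > 0"
  shows "cconj (\<lambda>x. f x + indic A x) (us, (\<lambda>_. 0), \<beta>)
       \<le> cconj f (us - xs, - ys, \<alpha>) + cconj (indic A) (xs, ys, \<alpha>)"
  unfolding cconj_zero_slope[OF assms]
proof (rule SUP_least)
  fix x
  have "lsub (ereal (us x)) (f x + indic A x)
      \<le> lsub (coupling x (us - xs, - ys, \<alpha>)) (f x) + lsub (coupling x (xs, ys, \<alpha>)) (indic A x)"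
    unfolding lsub_def coupling_def indic_def by (cases "f x") auto
  also have "\<dots> \<le> cconj f (us - xs, - ys, \<alpha>) + cconj (indic A) (xs, ys, \<alpha>)"
    unfolding cconj_def by (intro add_mono SUP_upper) simp_all
  finally show "lsub (ereal (us x)) (f x + indic A x) \<le> \<dots>" .
qed

lemma mem_wshift_iff:
  "((a, b, c), r) \<in> wshift E ((a', b', c'), r') \<longleftrightarrow> (((\<lambda>x. a x + a' x), (\<lambda>x. b x + b' x), c + c'), r + r') \<in> E"
proof
  assume "((a, b, c), r) \<in> wshift E ((a', b', c'), r')"
  then obtain qa qb qc qr where "((qa, qb, qc), qr) \<in> E" "a = qa - a'" "b = qb - b'" "c = qc - c'" "r = qr - r'"
    unfolding wshift_def by auto
  moreover have "(\<lambda>x. a x + a' x) = qa" "(\<lambda>x. b x + b' x) = qb"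
    using calculation by auto
  ultimately show "(((\<lambda>x. a x + a' x), (\<lambda>x. b x + b' x), c + c'), r + r') \<in> E" by simp
next
  assume "(((\<lambda>x. a x + a' x), (\<lambda>x. b x + b' x), c + c'), r + r') \<in> E"
  then show "((a, b, c), r) \<in> wshift E ((a', b', c'), r')"
    unfolding wshift_def by (force intro!: image_eqI[where x="(((\<lambda>x. a x + a' x), (\<lambda>x. b x + b' x), c + c'), r + r')"])
qed

lemma origin_in_edom_cconj_indic: "((\<lambda>_. 0), (\<lambda>_. 0), 1) \<in> edom (Wsp T) (cconj (indic A))"
proof -
  have "cconj (indic A) ((\<lambda>_. 0), (\<lambda>_. 0), 1) \<le> 0"
    unfolding cconj_def by (rule SUP_least) (auto simp: lsub_def indic_def coupling_def)
  then show ?thesis unfolding edom_def Wsp_def using zero_in_tdual by auto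
qed

lemma OKpiece_Bset_iff:
  assumes "proper_fun f" "proper_fun g" "A \<noteq> {}" "\<beta> > 0"
    and u: "u \<in> edom (Wsp T) (cconj g)" and z: "z \<in> edom (Wsp T) (cconj (indic A))"
  shows "(((\<lambda>_. 0), (\<lambda>_. 0), \<beta>), r) \<in> OKpiece T f g A z u \<longleftrightarrow> ereal (- r) \<le> phiF f g A u z"
proof -
  obtain us vs \<gamma> where u_eq: "u = (us, vs, \<gamma>)" by (cases u)
  obtain xs ys \<alpha> where z_eq: "z = (xs, ys, \<alpha>)" by (cases z)
  define G where "G = real_of_ereal (cconj g u)"
  define D where "D = real_of_ereal (cconj (indic A) z)"
  define F where "F = cconj f (us - xs, - ys, \<alpha>)"
  have G: "cconj g u = ereal G" unfolding G_def using cconj_real_on_edom[OF assms(2) u] .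
  have D: "cconj (indic A) z = ereal D"
    unfolding D_def using cconj_real_on_edom[OF proper_fun_indic[OF assms(3)] z] .
  have "\<forall>x. f x \<noteq> -\<infinity>" using assms(1) unfolding proper_fun_def by simp
  moreover have "us \<in> tdual T" using u unfolding u_eq edom_def Wsp_def by simp
  ultimately have "(((\<lambda>_. 0), (\<lambda>_. 0), \<beta>), r) \<in> OKpiece T f g A z u \<longleftrightarrow> F \<le> ereal (r + (G - D))"
    using assms(4) unfolding OKpiece_def F_def
    by (simp add: z_eq u_eq G_def D_def mem_wshift_iff wepi_def Wsp_def zero_in_tdual cconj_usub_coupling)
  also have "\<dots> \<longleftrightarrow> ereal (- r) \<le> lsub (lsub (ereal G) F) (ereal D)"
    by (cases F) (auto simp: lsub_def)
  also have "lsub (lsub (ereal G) F) (ereal D) = phiF f g A u z"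
    using G D by (simp add: z_eq u_eq phiF_triple F_def)
  finally show ?thesis .
qed

lemma OmegaSet_Bset_iff:
  assumes "proper_fun f" "proper_fun g" "A \<noteq> {}" "\<beta> > 0"
  shows "(((\<lambda>_. 0), (\<lambda>_. 0), \<beta>), r) \<in> OmegaSet T f g A \<longleftrightarrow>
    (\<exists>z \<in> edom (Wsp T) (cconj (indic A)). \<forall>u \<in> edom (Wsp T) (cconj g). ereal (- r) \<le> phiF f g A u z)"
  unfolding OmegaSet_def using OKpiece_Bset_iff[OF assms] by simp

lemma KSet_Bset_iff:
  assumes "proper_fun f" "proper_fun g" "A \<noteq> {}" "\<beta> > 0"
  shows "(((\<lambda>_. 0), (\<lambda>_. 0), \<beta>), r) \<in> KSet T f g A \<longleftrightarrow>
    (\<forall>u \<in> edom (Wsp T) (cconj g). \<exists>z \<in> edom (Wsp T) (cconj (indic A)). ereal (- r) \<le> phiF f g A u z)"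
  unfolding KSet_def using OKpiece_Bset_iff[OF assms] by simp

text \<open>Since \<open>\<Omega> \<subseteq> K\<close> holds trivially on \<open>B\<close>, the condition \<open>\<Omega> \<inter> B = K \<inter> B\<close> says exactly that
  every real lower bound attained "pointwise in u" is attained by a single \<open>z\<close>.\<close>
lemma OmegaSet_eq_KSet_on_Bset_iff:
  assumes "proper_fun f" "proper_fun g" "A \<noteq> {}"
  shows "OmegaSet T f g A \<inter> Bset = KSet T f g A \<inter> Bset \<longleftrightarrow>
    (\<forall>t. (\<forall>u \<in> edom (Wsp T) (cconj g). \<exists>z \<in> edom (Wsp T) (cconj (indic A)). ereal t \<le> phiF f g A u z)
      \<longrightarrow> (\<exists>z \<in> edom (Wsp T) (cconj (indic A)). \<forall>u \<in> edom (Wsp T) (cconj g). ereal t \<le> phiF f g A u z))"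
  (is "?eq \<longleftrightarrow> (\<forall>t. ?K t \<longrightarrow> ?O t)")
proof
  assume eq: ?eq
  show "\<forall>t. ?K t \<longrightarrow> ?O t"
  proof (intro allI impI)
    fix t
    assume "?K t"
    then have "(((\<lambda>_. 0), (\<lambda>_. 0), 1), - t) \<in> KSet T f g A \<inter> Bset"
      by (simp add: KSet_Bset_iff[OF assms] Bset_def)
    then have "(((\<lambda>_. 0), (\<lambda>_. 0), 1), - t) \<in> OmegaSet T f g A" using eq by blast
    then show "?O t" by (simp add: OmegaSet_Bset_iff[OF assms])
  qed
next
  assume "\<forall>t. ?K t \<longrightarrow> ?O t"
  then show ?eq
    unfolding Bset_def by (fastforce simp: OmegaSet_Bset_iff[OF assms] KSet_Bset_iff[OF assms])
qed

lemma LambdaSet_Bset_iff: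
  assumes "proper_fun g" "\<beta> > 0"
  shows "(((\<lambda>_. 0), (\<lambda>_. 0), \<beta>), r) \<in> LambdaSet T f g A \<longleftrightarrow>
    (\<forall>u \<in> edom (Wsp T) (cconj g). cconj (\<lambda>x. f x + indic A x) (fst u, (\<lambda>_. 0), 1) \<le> ereal r + cconj g u)"
proof -
  have "(((\<lambda>_. 0), (\<lambda>_. 0), \<beta>), r) \<in> wshift (wepi T (cconj (\<lambda>x. f x + indic A x)))
          ((fst u, (\<lambda>_. 0), 0), real_of_ereal (cconj g u))
      \<longleftrightarrow> cconj (\<lambda>x. f x + indic A x) (fst u, (\<lambda>_. 0), 1) \<le> ereal r + cconj g u"
    if u: "u \<in> edom (Wsp T) (cconj g)" for u
  proof -
    have "fst u \<in> tdual T" using u unfolding edom_def Wsp_def by auto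
    moreover obtain G where "cconj g u = ereal G" using cconj_real_on_edom[OF assms(1) u] by blast
    ultimately show ?thesis
      using assms(2) by (simp add: mem_wshift_iff wepi_def Wsp_def zero_in_tdual cconj_zero_slope)
  qed
  then show ?thesis unfolding LambdaSet_def by simp
qed

lemma wepi_cconj_Bset_iff:
  "\<beta> > 0 \<Longrightarrow> (((\<lambda>_. 0), (\<lambda>_. 0), \<beta>), r) \<in> wepi T (cconj h) \<longleftrightarrow> - (INF x. h x) \<le> ereal r"
  by (simp add: wepi_def Wsp_def zero_in_tdual cconj_origin)

text \<open>The objective \<open>g\<^sup>c(u) - (f + \<delta>\<^sub>A)\<^sup>c(u*, 0, 1)\<close> of the Toland-Singer type dual; its infimum
  over \<open>dom g\<^sup>c\<close> dominates both Fenchel-type dual values.\<close>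
definition conj_diff :: "('a \<Rightarrow> ereal) \<Rightarrow> ('a \<Rightarrow> ereal) \<Rightarrow> 'a set \<Rightarrow> 'a wpt \<Rightarrow> ereal" where
  "conj_diff f g A u = cconj g u - cconj (\<lambda>x. f x + indic A x) (fst u, (\<lambda>_. 0), 1)"

lemma phiF_le_conj_diff:
  assumes "proper_fun f" "proper_fun g" "A \<noteq> {}" "u \<in> edom (Wsp T) (cconj g)"
  shows "phiF f g A u z \<le> conj_diff f g A u"
proof -
  obtain xs ys \<alpha> where z: "z = (xs, ys, \<alpha>)" by (cases z)
  have G: "cconj g u = ereal (real_of_ereal (cconj g u))" by (rule cconj_real_on_edom[OF assms(2,4)])
  have "phiF f g A u z = cconj g u - (cconj f (fst u - xs, - ys, \<alpha>) + cconj (indic A) (xs, ys, \<alpha>))"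
    unfolding z by (subst G, rule phiF_eq_minus_sum[OF assms(1,3) G])
  also have "\<dots> \<le> conj_diff f g A u"
    unfolding conj_diff_def by (intro ereal_minus_mono order_refl cconj_add_indic_le) simp
  finally show ?thesis .
qed

lemma vDFbar_le_INF_conj_diff:
  assumes "proper_fun f" "proper_fun g" "A \<noteq> {}"
  shows "vDFbar T f g A \<le> (INF u \<in> edom (Wsp T) (cconj g). conj_diff f g A u)"
  unfolding vDFbar_def
  by (intro INF_superset_mono[OF order_refl] SUP_least) (rule phiF_le_conj_diff[OF assms])

lemma INF_conj_diff_le_vP:
  assumes "proper_fun g"
    and "wepi T (cconj (\<lambda>x. usub (f x) (g x) + indic A x)) \<inter> Bset = LambdaSet T f g A \<inter> Bset"
  shows "(INF u \<in> edom (Wsp T) (cconj g). conj_diff f g A u) \<le> vP f g A"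
proof (rule ccontr)
  assume "\<not> ?thesis"
  then have "vP f g A < (INF u \<in> edom (Wsp T) (cconj g). conj_diff f g A u)" by simp
  then obtain t where t: "vP f g A < ereal t" "ereal t < (INF u \<in> edom (Wsp T) (cconj g). conj_diff f g A u)"
    using ereal_dense2 by blast
  have "cconj (\<lambda>x. f x + indic A x) (fst u, (\<lambda>_. 0), 1) \<le> ereal (- t) + cconj g u"
    if u: "u \<in> edom (Wsp T) (cconj g)" for u
  proof -
    have "ereal t \<le> conj_diff f g A u" using less_le_trans[OF t(2) INF_lower[OF u]] by simp
    moreover obtain G where "cconj g u = ereal G" using cconj_real_on_edom[OF assms(1) u] by blast
    moreover have "ereal t \<le> ereal G - S \<Longrightarrow> S \<le> ereal (- t) + ereal G" for S
      by (cases S) auto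
    ultimately show ?thesis unfolding conj_diff_def by simp
  qed
  then have "(((\<lambda>_. 0), (\<lambda>_. 0), 1), - t) \<in> LambdaSet T f g A \<inter> Bset"
    by (simp add: LambdaSet_Bset_iff[OF assms(1)] Bset_def)
  then have "(((\<lambda>_. 0), (\<lambda>_. 0), 1), - t) \<in> wepi T (cconj (\<lambda>x. usub (f x) (g x) + indic A x))"
    using assms(2) by blast
  then have "ereal t \<le> vP f g A"
    unfolding vP_def wepi_cconj_Bset_iff[OF zero_less_one] by (simp add: ereal_uminus_le_reorder)
  then show False using t(1) by simp
qed

lemma vDF_le_vDFbar: "vDF T f g A \<le> vDFbar T f g A"
  unfolding vDF_def vDFbar_def
proof (intro SUP_least INF_greatest)
  fix z u
  assume "z \<in> Zsp T" "u \<in> edom (Wsp T) (cconj g)"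
  then show "(INF u \<in> edom (Wsp T) (cconj g). phiF f g A u z) \<le> (SUP z \<in> Zsp T. phiF f g A u z)"
    by (meson INF_lower SUP_upper order_trans)
qed

text \<open>A dual point \<open>z \<in> dom \<delta>\<^sub>A\<^sup>c\<close> may have level \<open>\<alpha> \<le> 0\<close>, so it need not lie in \<open>Z\<close>; raising the level
  to \<open>max \<alpha> 1\<close> only increases \<open>\<phi>\<close>.\<close>
lemma INF_phiF_le_vDF:
  assumes "z \<in> edom (Wsp T) (cconj (indic A))"
  shows "(INF u \<in> edom (Wsp T) (cconj g). phiF f g A u z) \<le> vDF T f g A"
proof -
  obtain xs ys \<alpha> where z: "z = (xs, ys, \<alpha>)" by (cases z)
  have "(INF u \<in> edom (Wsp T) (cconj g). phiF f g A u z)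
      \<le> (INF u \<in> edom (Wsp T) (cconj g). phiF f g A u (xs, ys, max \<alpha> 1))"
    unfolding z by (intro INF_mono' phiF_mono_level) simp
  also have "\<dots> \<le> vDF T f g A"
    unfolding vDF_def using assms by (intro SUP_upper) (auto simp: z edom_def Wsp_def Zsp_def)
  finally show ?thesis .
qed

text \<open>The bound \<open>s = +\<infinity>\<close> is excluded by finiteness of \<open>\<phi>\<close> unless \<open>U\<close> is empty.\<close>
lemma bex_ball_le_if_ball_bex_le:
  fixes \<phi> :: "'u \<Rightarrow> 'z \<Rightarrow> ereal"
  assumes "Z \<noteq> {}" "\<And>u z. u \<in> U \<Longrightarrow> \<phi> u z \<noteq> \<infinity>"
    and real_bounds: "\<And>t. \<forall>u \<in> U. \<exists>z \<in> Z. ereal t \<le> \<phi> u z \<Longrightarrow> \<exists>z \<in> Z. \<forall>u \<in> U. ereal t \<le> \<phi> u z"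
    and bound: "\<forall>u \<in> U. \<exists>z \<in> Z. s \<le> \<phi> u z"
  shows "\<exists>z \<in> Z. \<forall>u \<in> U. s \<le> \<phi> u z"
proof (cases s)
  case (real t)
  then show ?thesis using real_bounds bound by simp
next
  case PInf
  then have "U = {}" using bound assms(2) by fastforce
  then show ?thesis using assms(1) by blast
next
  case MInf
  then show ?thesis using assms(1) by auto
qed

lemma strong_duality_DF_if_DFbar:
  assumes "proper_fun f" "proper_fun g" "A \<noteq> {}"
    and "strong_duality_DFbar T f g A" "OmegaSet T f g A \<inter> Bset = KSet T f g A \<inter> Bset"
  shows "strong_duality_DF T f g A"
proof -
  let ?U = "edom (Wsp T) (cconj g)" and ?Z = "edom (Wsp T) (cconj (indic A))"
  have vP: "vP f g A = vDFbar T f g A"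
    and pointwise: "\<forall>u \<in> ?U. \<exists>z \<in> ?Z. vDFbar T f g A \<le> phiF f g A u z"
    using assms(4) unfolding strong_duality_DFbar_def by auto
  have "\<exists>z \<in> ?Z. \<forall>u \<in> ?U. vDFbar T f g A \<le> phiF f g A u z"
  proof (rule bex_ball_le_if_ball_bex_le[OF _ _ _ pointwise])
    show "?Z \<noteq> {}" using origin_in_edom_cconj_indic by blast
    show "phiF f g A u z \<noteq> \<infinity>" if "u \<in> ?U" for u z
      using phiF_neq_pinf[OF assms(1,3) cconj_real_on_edom[OF assms(2) that]] .
  qed (use assms(5) OmegaSet_eq_KSet_on_Bset_iff[OF assms(1-3)] in blast)
  then obtain z where z: "z \<in> ?Z" "\<forall>u \<in> ?U. vDFbar T f g A \<le> phiF f g A u z" ..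
  have "vDFbar T f g A \<le> (INF u \<in> ?U. phiF f g A u z)" using z(2) by (simp add: INF_greatest)
  also have "\<dots> \<le> vDF T f g A" using z(1) by (rule INF_phiF_le_vDF)
  finally have "vDF T f g A = vDFbar T f g A" using vDF_le_vDFbar by (rule antisym[rotated])
  then show ?thesis unfolding strong_duality_DF_def using vP z by auto
qed

lemma strong_duality_DFbar_if_DF:
  assumes "proper_fun f" "proper_fun g" "A \<noteq> {}"
    and "wepi T (cconj (\<lambda>x. usub (f x) (g x) + indic A x)) \<inter> Bset = LambdaSet T f g A \<inter> Bset"
    and "strong_duality_DF T f g A"
  shows "strong_duality_DFbar T f g A \<and> OmegaSet T f g A \<inter> Bset = KSet T f g A \<inter> Bset"
proof -
  let ?U = "edom (Wsp T) (cconj g)" and ?Z = "edom (Wsp T) (cconj (indic A))"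
  obtain z where vP: "vP f g A = vDF T f g A"
    and z: "z \<in> ?Z" "\<forall>u \<in> ?U. vDF T f g A \<le> phiF f g A u z"
    using assms(5) unfolding strong_duality_DF_def by auto
  have gap: "(INF u \<in> ?U. conj_diff f g A u) \<le> vDF T f g A"
    using INF_conj_diff_le_vP[OF assms(2,4)] vP by simp
  have "vDFbar T f g A = vDF T f g A"
    using vDFbar_le_INF_conj_diff[OF assms(1-3)] gap vDF_le_vDFbar by (metis antisym order_trans)
  then have "strong_duality_DFbar T f g A"
    unfolding strong_duality_DFbar_def using vP z by auto
  moreover have "OmegaSet T f g A \<inter> Bset = KSet T f g A \<inter> Bset"
    unfolding OmegaSet_eq_KSet_on_Bset_iff[OF assms(1-3)]
  proof (intro allI impI)
    fix t
    assume "\<forall>u \<in> ?U. \<exists>z \<in> ?Z. ereal t \<le> phiF f g A u z"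
    then have "ereal t \<le> (INF u \<in> ?U. conj_diff f g A u)"
      using phiF_le_conj_diff[OF assms(1-3)] by (meson INF_greatest order_trans)
    then show "\<exists>z \<in> ?Z. \<forall>u \<in> ?U. ereal t \<le> phiF f g A u z"
      using gap z by (meson order_trans)
  qed
  ultimately show ?thesis ..
qed

theorem theorem5p5:
  fixes T :: "'a::real_vector topology"
    and f g :: "'a \<Rightarrow> ereal" and A :: "'a set"
  assumes "hlc_space T"
    and "\<exists>x::'a. x \<noteq> 0"
    and "proper_fun f" and "convex_fun f"
    and "proper_fun g" and "convex_fun g"
    and "fdom f \<subseteq> fdom g"
    and "A \<noteq> {}"
  shows "(strong_duality_DFbar T f g A \<and> OmegaSet T f g A \<inter> Bset = KSet T f g A \<inter> Bset
            \<longrightarrow> strong_duality_DF T f g A)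
       \<and> (wepi T (cconj (\<lambda>x. usub (f x) (g x) + indic A x)) \<inter> Bset = LambdaSet T f g A \<inter> Bset
            \<longrightarrow> (strong_duality_DF T f g A \<longleftrightarrow>
                 strong_duality_DFbar T f g A \<and> OmegaSet T f g A \<inter> Bset = KSet T f g A \<inter> Bset))"
  using strong_duality_DF_if_DFbar[OF assms(3,5,8)] strong_duality_DFbar_if_DF[OF assms(3,5,8)]
  by blast

end
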